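(* There is a numerical constant $C>0$ such that the following holds. Let $\delta\in[0,1]$, $h\in(0,1/2]$ with $h\le\delta$, $(u,w)\in\mathcal A_\delta$, $E_h=E_h(u,w)$, and assume $w'(r)\in(-\frac32,-\frac12)$ for all $r\in[\frac\delta8,1]$. Then \[ \min\Big\{\frac1{\delta^2\log\frac1h},1\Big\}\le C\,E_h . \]
   Context: Let $B_1=\{x\in\mathbb R^2:|x|<1\}$. For scalar functions $u,w$ on $(0,1)$ define $U(x)=\frac12(u(|x|)-|x|)\frac{x}{|x|}$ and $W(x)=w(|x|)$. For $\delta\in[0,1]$ let $\mathcal A_\delta$ be the set of pairs $(u,w)$ with $(U,W)\in W^{1,2}(B_1;\mathbb R^2)\times W^{2,2}(B_1)$, $w(0)=0$, $w(1)=1-\delta$. For $h>0$, \[ E_h(u,w)=\int_0^1\frac{u^2}{r}+r(u'+w'^2-1)^2+h^2\Big(rw''^2+\frac{w'^2}{r}\Big)dr . \] For $(u,w)\in\mathcal A_\delta$, $w'$ denotes its continuous representative on $(0,1]$. *)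

theory Defs
  imports "HOL-Analysis.Analysis"
begin

fun iter_pd :: "'a::euclidean_space list \<Rightarrow> ('a \<Rightarrow> real) \<Rightarrow> 'a \<Rightarrow> real" where
  "iter_pd [] f = f"
| "iter_pd (b # bs) f = (\<lambda>x. frechet_derivative (iter_pd bs f) (at x) b)"

definition smooth_fn :: "('a::euclidean_space \<Rightarrow> real) \<Rightarrow> bool" where
  "smooth_fn f \<longleftrightarrow> (\<forall>bs. set bs \<subseteq> Basis \<longrightarrow>
      continuous_on UNIV (iter_pd bs f) \<and> (\<forall>x. iter_pd bs f differentiable (at x)))"

definition test_fn :: "'a::euclidean_space set \<Rightarrow> ('a \<Rightarrow> real) \<Rightarrow> bool" where
  "test_fn S \<phi> \<longleftrightarrow> smooth_fn \<phi> \<and> compact (closure {x. \<phi> x \<noteq> 0})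
      \<and> closure {x. \<phi> x \<noteq> 0} \<subseteq> S"

definition L2_on :: "'a::euclidean_space set \<Rightarrow> ('a \<Rightarrow> real) \<Rightarrow> bool" where
  "L2_on S f \<longleftrightarrow> f \<in> borel_measurable (lebesgue_on S) \<and> integrable (lebesgue_on S) (\<lambda>x. (f x)\<^sup>2)"

definition loc_integrable_on :: "'a::euclidean_space set \<Rightarrow> ('a \<Rightarrow> real) \<Rightarrow> bool" where
  "loc_integrable_on S f \<longleftrightarrow> (\<forall>K. compact K \<and> K \<subseteq> S \<longrightarrow> set_integrable lebesgue K f)"

definition weak_partial :: "'a::euclidean_space set \<Rightarrow> ('a \<Rightarrow> real) \<Rightarrow> 'a \<Rightarrow> ('a \<Rightarrow> real) \<Rightarrow> bool" where
  "weak_partial S f b g \<longleftrightarrow> loc_integrable_on S f \<and> loc_integrable_on S g \<and>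
     (\<forall>\<phi>. test_fn S \<phi> \<longrightarrow>
        (LINT x : S | lebesgue. f x * frechet_derivative \<phi> (at x) b)
          = - (LINT x : S | lebesgue. g x * \<phi> x))"

definition W12_on :: "'a::euclidean_space set \<Rightarrow> ('a \<Rightarrow> real) \<Rightarrow> bool" where
  "W12_on S f \<longleftrightarrow> L2_on S f \<and> (\<forall>b\<in>Basis. \<exists>g. L2_on S g \<and> weak_partial S f b g)"

definition W22_on :: "'a::euclidean_space set \<Rightarrow> ('a \<Rightarrow> real) \<Rightarrow> bool" where
  "W22_on S f \<longleftrightarrow> L2_on S f \<and> (\<forall>b\<in>Basis. \<exists>g. W12_on S g \<and> weak_partial S f b g)"

definition W12_vec_on :: "'a::euclidean_space set \<Rightarrow> ('a \<Rightarrow> 'b::euclidean_space) \<Rightarrow> bool" where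
  "W12_vec_on S F \<longleftrightarrow> (\<forall>c\<in>Basis. W12_on S (\<lambda>x. F x \<bullet> c))"

definition U_field :: "(real \<Rightarrow> real) \<Rightarrow> real^2 \<Rightarrow> real^2" where
  "U_field u x = ((u (norm x) - norm x) / 2) *\<^sub>R (x /\<^sub>R norm x)"

definition W_field :: "(real \<Rightarrow> real) \<Rightarrow> real^2 \<Rightarrow> real" where
  "W_field w x = w (norm x)"

text \<open>The class A_delta. Point values w(0), w(1) refer to the continuous representative
  of w on [0,1]; we require the given w to be that representative.\<close>
definition A_adm :: "real \<Rightarrow> ((real \<Rightarrow> real) \<times> (real \<Rightarrow> real)) set" where
  "A_adm \<delta> = {(u, w). W12_vec_on (ball 0 1) (U_field u) \<and> W22_on (ball 0 1) (W_field w)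
      \<and> continuous_on {0..1} w \<and> w 0 = 0 \<and> w 1 = 1 - \<delta>}"

text \<open>The energy, with du = u', dw = w', ddw = w'' supplied explicitly (possibly infinite).\<close>
definition E_energy :: "real \<Rightarrow> (real \<Rightarrow> real) \<Rightarrow> (real \<Rightarrow> real) \<Rightarrow> (real \<Rightarrow> real) \<Rightarrow> (real \<Rightarrow> real) \<Rightarrow> ennreal" where
  "E_energy h u du dw ddw = (\<integral>\<^sup>+ r \<in> {0<..<1}.
      ennreal ((u r)\<^sup>2 / r + r * (du r + (dw r)\<^sup>2 - 1)\<^sup>2
               + h\<^sup>2 * (r * (ddw r)\<^sup>2 + (dw r)\<^sup>2 / r)) \<partial>lborel)"

end

theory Submission
  imports Defs
begin

(* The slope condition on [\<delta>/8, 1] and w(1) = 1 - \<delta> force w(\<delta>/8) \<ge> 7/16, while w(0) = 0.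
   The bending term h\<^sup>2 \<integral> w'\<^sup>2/r controls \<integral> |w'| over (0, h), so unless E_h is of order
   one most of this rise happens on (h, \<delta>/8), and Cauchy-Schwarz gives
   \<integral>_h^{\<delta>/8} w'\<^sup>2 \<ge> 9/(8\<delta>).  Testing the weak derivative of u against a smooth plateau equal
   to 1 on [h, \<delta>/8] and supported in [h/2, \<delta>/4] expresses that integral through the
   stretching residual u' + w'\<^sup>2 - 1 and through u/r.  Both are bounded by AM-GM against
   \<integral> dr/r = log (\<delta>/(2h)) \<le> log (1/h), and optimizing the AM-GM weight bounds
   1/(\<delta>\<^sup>2 log (1/h)) by a constant multiple of E_h.  Weak derivatives are turned into classical
   integrals (including the fundamental theorem of calculus for w) by testing against plateaus
   built from exp (-1/x). *)

section \<open>Smooth plateau functions\<close>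

fun times_differentiable :: "nat \<Rightarrow> (real \<Rightarrow> real) \<Rightarrow> bool" where
  "times_differentiable 0 f = True"
| "times_differentiable (Suc n) f = ((\<forall>x. f differentiable (at x)) \<and> times_differentiable n (deriv f))"

lemma times_differentiable_SucI:
  assumes "\<And>x. (f has_real_derivative g x) (at x)" "times_differentiable n g"
  shows "times_differentiable (Suc n) f"
proof -
  have "deriv f = g" using assms(1) DERIV_imp_deriv by blast
  then show ?thesis using assms real_differentiable_def by auto
qed

lemma times_differentiable_SucD:
  "times_differentiable (Suc n) f \<Longrightarrow> times_differentiable n f"
  by (induction n arbitrary: f) auto

lemma times_differentiable_has_deriv:
  "times_differentiable (Suc n) f \<Longrightarrow> (f has_real_derivative deriv f x) (at x)"
  using DERIV_deriv_iff_real_differentiable by auto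

lemma times_differentiable_const: "times_differentiable n (\<lambda>x. c)"
proof (induction n arbitrary: c)
  case (Suc n) then show ?case by (intro times_differentiable_SucI[where g="\<lambda>x. 0"]) auto
qed simp

lemma times_differentiable_ident: "times_differentiable n (\<lambda>x. x)"
  by (cases n) (auto intro: times_differentiable_SucI[where g="\<lambda>x. 1"] times_differentiable_const)

lemma times_differentiable_add:
  "times_differentiable n f \<Longrightarrow> times_differentiable n g \<Longrightarrow> times_differentiable n (\<lambda>x. f x + g x)"
proof (induction n arbitrary: f g)
  case (Suc n)
  show ?case
    by (rule times_differentiable_SucI[where g="\<lambda>x. deriv f x + deriv g x"])
      (use Suc in \<open>auto intro!: derivative_eq_intros times_differentiable_has_deriv\<close>)
qed simp

lemma times_differentiable_mult:
  "times_differentiable n f \<Longrightarrow> times_differentiable n g \<Longrightarrow> times_differentiable n (\<lambda>x. f x * g x)"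
proof (induction n arbitrary: f g)
  case (Suc n)
  have "times_differentiable n f" "times_differentiable n g"
    using Suc.prems times_differentiable_SucD by blast+
  then have "times_differentiable n (\<lambda>x. deriv f x * g x + f x * deriv g x)"
    using Suc by (intro times_differentiable_add Suc.IH) auto
  then show ?case
    by (intro times_differentiable_SucI[where g="\<lambda>x. deriv f x * g x + f x * deriv g x"])
      (use Suc in \<open>auto intro!: derivative_eq_intros times_differentiable_has_deriv\<close>)
qed simp

lemma times_differentiable_compose:
  "times_differentiable n g \<Longrightarrow> times_differentiable n f \<Longrightarrow> times_differentiable n (\<lambda>x. g (f x))"
proof (induction n arbitrary: f g)
  case (Suc n)
  have "times_differentiable n f" using Suc.prems times_differentiable_SucD by blast
  then have "times_differentiable n (\<lambda>x. deriv g (f x) * deriv f x)"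
    using Suc.prems by (intro times_differentiable_mult[OF Suc.IH[of "deriv g" f]]) auto
  then show ?case
    by (intro times_differentiable_SucI[where g="\<lambda>x. deriv g (f x) * deriv f x"])
      (use Suc.prems in \<open>auto intro!: DERIV_chain2[OF times_differentiable_has_deriv times_differentiable_has_deriv]\<close>)
qed simp

lemma times_differentiable_inverse:
  "times_differentiable n g \<Longrightarrow> (\<And>x. g x \<noteq> 0) \<Longrightarrow> times_differentiable n (\<lambda>x. 1 / g x)"
proof (induction n arbitrary: g)
  case (Suc n)
  define g' where "g' = (\<lambda>x. (-1) * deriv g x * ((1 / g x) * (1 / g x)))"
  have "times_differentiable n g" using Suc.prems times_differentiable_SucD by blast
  then have "times_differentiable n g'"
    unfolding g'_def using Suc by (intro times_differentiable_mult times_differentiable_const Suc.IH) auto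
  then show ?case
    by (intro times_differentiable_SucI[where g=g'])
      (use Suc in \<open>auto intro!: derivative_eq_intros times_differentiable_has_deriv simp: g'_def power2_eq_square\<close>)
qed simp

lemma times_differentiable_affine: "times_differentiable n (\<lambda>x. (x - p) / q)"
proof -
  have "times_differentiable n (\<lambda>x. (1 / q) * x + (- p / q))"
    by (intro times_differentiable_add times_differentiable_mult times_differentiable_const
        times_differentiable_ident)
  then show ?thesis by (simp add: diff_divide_distrib)
qed

lemma times_differentiable_imp_smooth_fn:
  assumes "\<And>n. times_differentiable n f"
  shows "smooth_fn f"
proof -
  have diff: "(deriv ^^ k) f differentiable (at x)" for k x
  proof -
    have "times_differentiable (Suc 0) ((deriv ^^ k) f)"
      using assms[of "k + 1"]
      by (induction k arbitrary: f) (simp_all add: funpow_Suc_right del: funpow.simps)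
    then show ?thesis by simp
  qed
  have "iter_pd bs f = (deriv ^^ length bs) f" if "set bs \<subseteq> Basis" for bs
    using that
  proof (induction bs)
    case (Cons b bs)
    then have "b = 1" and IH: "iter_pd bs f = (deriv ^^ length bs) f" by auto
    have "frechet_derivative ((deriv ^^ length bs) f) (at x) 1 = deriv ((deriv ^^ length bs) f) x" for x
      using diff[of "length bs" x] frechet_derivative_at[of _ "(*) _"]
      by (metis DERIV_deriv_iff_real_differentiable has_field_derivative_def mult.right_neutral)
    then show ?case using \<open>b = 1\<close> by (simp add: IH)
  qed simp
  then show ?thesis
    unfolding smooth_fn_def
    by (metis diff continuous_at_imp_continuous_on differentiable_imp_continuous_within)
qed

definition flat_exp :: "nat \<Rightarrow> real \<Rightarrow> real" where
  "flat_exp k x = (if x > 0 then (1/x)^k * exp (-1/x) else 0)"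

lemma flat_exp_nonneg: "flat_exp k x \<ge> 0"
  by (simp add: flat_exp_def)

lemma flat_exp_pos: "x > 0 \<Longrightarrow> flat_exp 0 x > 0"
  by (simp add: flat_exp_def)

lemma flat_exp_eq_0: "x \<le> 0 \<Longrightarrow> flat_exp k x = 0"
  by (simp add: flat_exp_def)

lemma flat_exp_has_real_derivative:
  "(flat_exp k has_real_derivative (- real k * flat_exp (k+1) x + flat_exp (k+2) x)) (at x)"
proof -
  consider "x < 0" | "x = 0" | "x > 0" by linarith
  then show ?thesis
  proof cases
    case 1
    have "((\<lambda>x. 0) has_real_derivative 0) (at x)" by simp
    then have "(flat_exp k has_real_derivative 0) (at x)"
      by (rule has_field_derivative_transform_within_open[where S="{..<0}"])
        (use 1 in \<open>auto simp: flat_exp_def\<close>)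
    then show ?thesis using 1 by (simp add: flat_exp_def)
  next
    case 2
    have "((\<lambda>y. (inverse y)^(k+1) / exp (inverse y)) \<longlongrightarrow> (0::real)) (at_right 0)"
      using filterlim_compose[OF tendsto_power_div_exp_0 filterlim_inverse_at_top_right] .
    then have right: "((\<lambda>y. (flat_exp k y - flat_exp k 0) / (y - 0)) \<longlongrightarrow> 0) (at_right 0)"
      by (rule tendsto_cong[THEN iffD1, rotated])
        (auto simp: eventually_at_right_field flat_exp_def exp_minus field_simps inverse_eq_divide
          intro!: exI[of _ 1])
    have left: "((\<lambda>y. (flat_exp k y - flat_exp k 0) / (y - 0)) \<longlongrightarrow> 0) (at_left 0)"
      by (rule tendsto_eventually)
        (auto simp: eventually_at_left_field flat_exp_def intro!: exI[of _ "-1"])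
    have "(flat_exp k has_real_derivative 0) (at 0)"
      unfolding has_field_derivative_iff by (rule filterlim_split_at[OF left right])
    then show ?thesis using 2 by (simp add: flat_exp_def)
  next
    case 3
    have "((\<lambda>x. (1/x)^k * exp (-1/x)) has_real_derivative
        (- real k * flat_exp (k+1) x + flat_exp (k+2) x)) (at x)"
      using 3 by (auto intro!: derivative_eq_intros simp: flat_exp_def field_simps power2_eq_square)
        (cases k; simp)
    then show ?thesis
      by (rule has_field_derivative_transform_within_open[where S="{0<..}"])
        (use 3 in \<open>auto simp: flat_exp_def\<close>)
  qed
qed

lemma times_differentiable_flat_exp: "times_differentiable n (flat_exp k)"
proof (induction n arbitrary: k)
  case (Suc n)
  show ?case
    by (rule times_differentiable_SucI[OF flat_exp_has_real_derivative])
      (intro times_differentiable_add times_differentiable_mult times_differentiable_const Suc.IH)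
qed simp

definition smooth_step :: "real \<Rightarrow> real" where
  "smooth_step x = flat_exp 0 x / (flat_exp 0 x + flat_exp 0 (1 - x))"

lemma smooth_step_denom_pos: "flat_exp 0 x + flat_exp 0 (1 - x) > 0"
  using flat_exp_pos[of x] flat_exp_pos[of "1 - x"] flat_exp_nonneg[of 0 x] flat_exp_nonneg[of 0 "1 - x"]
  by (cases "x > 0") auto

lemma times_differentiable_smooth_step: "times_differentiable n smooth_step"
proof -
  have "times_differentiable n (\<lambda>x. flat_exp 0 x * (1 / (flat_exp 0 x + flat_exp 0 (1 - x))))"
    using smooth_step_denom_pos[THEN less_imp_neq, symmetric]
    by (intro times_differentiable_mult times_differentiable_inverse times_differentiable_add
        times_differentiable_flat_exp times_differentiable_compose[OF _ times_differentiable_affine[of _ 1 "-1"], simplified])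
      auto
  then show ?thesis by (simp add: smooth_step_def[abs_def])
qed

lemma smooth_step_eq_0: "x \<le> 0 \<Longrightarrow> smooth_step x = 0"
  by (simp add: smooth_step_def flat_exp_eq_0)

lemma smooth_step_eq_1: "x \<ge> 1 \<Longrightarrow> smooth_step x = 1"
  using smooth_step_denom_pos[of x] by (simp add: smooth_step_def flat_exp_eq_0)

lemma smooth_step_nonneg: "smooth_step x \<ge> 0"
  using smooth_step_denom_pos[of x] flat_exp_nonneg[of 0 x] by (simp add: smooth_step_def)

lemma smooth_step_le_1: "smooth_step x \<le> 1"
  using smooth_step_denom_pos[of x] flat_exp_nonneg[of 0 "1 - x"]
  by (simp add: smooth_step_def divide_simps)

lemma smooth_step_has_real_derivative: "(smooth_step has_real_derivative deriv smooth_step x) (at x)"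
  using times_differentiable_has_deriv times_differentiable_smooth_step by blast

lemma continuous_deriv_smooth_step: "continuous_on A (deriv smooth_step)"
proof -
  have "times_differentiable 2 smooth_step" by (rule times_differentiable_smooth_step)
  then have "\<forall>x. deriv smooth_step differentiable (at x)" by (simp add: numeral_2_eq_2)
  then show ?thesis
    by (meson continuous_at_imp_continuous_on differentiable_imp_continuous_within)
qed

lemma deriv_smooth_step_eq_0: "x \<le> 0 \<or> x \<ge> 1 \<Longrightarrow> deriv smooth_step x = 0"
proof (elim disjE)
  assume "x \<le> 0"
  then show ?thesis
    by (intro DERIV_local_min[OF smooth_step_has_real_derivative, of 1])
      (auto simp: smooth_step_eq_0 smooth_step_nonneg)
next
  assume "x \<ge> 1"
  then show ?thesis
    by (intro DERIV_local_max[OF smooth_step_has_real_derivative, of 1])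
      (auto simp: smooth_step_eq_1 smooth_step_le_1)
qed

lemma deriv_smooth_step_bounded: "\<exists>K>0. \<forall>x. \<bar>deriv smooth_step x\<bar> \<le> K"
proof -
  have "bounded (deriv smooth_step ` {0..1})"
    by (intro compact_imp_bounded compact_continuous_image continuous_deriv_smooth_step) auto
  then obtain K where "K > 0" "\<And>x. x \<in> {0..1} \<Longrightarrow> \<bar>deriv smooth_step x\<bar> \<le> K"
    by (auto simp: bounded_pos)
  then show ?thesis
    by (metis atLeastAtMost_iff abs_zero less_imp_le deriv_smooth_step_eq_0 linorder_not_le)
qed

definition step_slope :: real where
  "step_slope = (SOME K. K > 0 \<and> (\<forall>x. \<bar>deriv smooth_step x\<bar> \<le> K))"

lemma step_slope_pos: "step_slope > 0"
  and abs_deriv_smooth_step_le: "\<bar>deriv smooth_step x\<bar> \<le> step_slope"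
  using someI_ex[OF deriv_smooth_step_bounded[unfolded Bex_def]] by (auto simp: step_slope_def)

definition ramp :: "real \<Rightarrow> real \<Rightarrow> real \<Rightarrow> real" where
  "ramp c e x = deriv smooth_step ((x - c) / e) / e"

lemma smooth_step_affine_has_real_derivative:
  assumes "e \<noteq> 0"
  shows "((\<lambda>x. smooth_step ((x - c) / e)) has_real_derivative ramp c e x) (at x)"
proof -
  have "((\<lambda>x. (x - c) / e) has_real_derivative 1 / e) (at x)"
    using assms by (auto intro!: derivative_eq_intros)
  from DERIV_chain2[OF smooth_step_has_real_derivative this] show ?thesis by (simp add: ramp_def)
qed

lemma continuous_ramp: "e \<noteq> 0 \<Longrightarrow> continuous_on A (ramp c e)"
  unfolding ramp_def[abs_def]
  by (intro continuous_intros continuous_on_compose2[OF continuous_deriv_smooth_step]) auto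

lemma ramp_eq_0: "0 < e \<Longrightarrow> x \<le> c \<or> x \<ge> c + e \<Longrightarrow> ramp c e x = 0"
  by (auto simp: ramp_def deriv_smooth_step_eq_0 divide_simps)

lemma abs_ramp_le: "0 < e \<Longrightarrow> \<bar>ramp c e x\<bar> \<le> step_slope / e"
  using abs_deriv_smooth_step_le by (simp add: ramp_def abs_div divide_right_mono)

lemma ramp_has_integral:
  assumes "0 < e"
  shows "(ramp c e has_integral 1) {c..c+e}"
proof -
  have "(ramp c e has_integral smooth_step ((c + e - c) / e) - smooth_step ((c - c) / e)) {c..c+e}"
    using assms smooth_step_affine_has_real_derivative[of e c]
    by (intro fundamental_theorem_of_calculus)
      (auto simp: has_real_derivative_iff_has_vector_derivative intro: has_vector_derivative_at_within)
  then show ?thesis using assms by (simp add: smooth_step_eq_0 smooth_step_eq_1)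
qed

definition plateau :: "real \<Rightarrow> real \<Rightarrow> real \<Rightarrow> real \<Rightarrow> real \<Rightarrow> real" where
  "plateau p q P Q x = smooth_step ((x - p) / q) - smooth_step ((x - P) / Q)"

definition plateau_deriv :: "real \<Rightarrow> real \<Rightarrow> real \<Rightarrow> real \<Rightarrow> real \<Rightarrow> real" where
  "plateau_deriv p q P Q x = ramp p q x - ramp P Q x"

lemma plateau_has_real_derivative:
  "q \<noteq> 0 \<Longrightarrow> Q \<noteq> 0 \<Longrightarrow> (plateau p q P Q has_real_derivative plateau_deriv p q P Q x) (at x)"
  unfolding plateau_def[abs_def] plateau_deriv_def
  by (intro derivative_intros smooth_step_affine_has_real_derivative)

lemma continuous_plateau: "q \<noteq> 0 \<Longrightarrow> Q \<noteq> 0 \<Longrightarrow> continuous_on A (plateau p q P Q)"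
  by (meson DERIV_isCont continuous_at_imp_continuous_on plateau_has_real_derivative)

lemma continuous_plateau_deriv: "q \<noteq> 0 \<Longrightarrow> Q \<noteq> 0 \<Longrightarrow> continuous_on A (plateau_deriv p q P Q)"
  unfolding plateau_deriv_def[abs_def] by (intro continuous_intros continuous_ramp)

lemma frechet_derivative_plateau:
  assumes "q \<noteq> 0" "Q \<noteq> 0"
  shows "frechet_derivative (plateau p q P Q) (at x) 1 = plateau_deriv p q P Q x"
  using plateau_has_real_derivative[OF assms, of p P x] frechet_derivative_at[of _ "(*) _"]
  by (metis has_field_derivative_def mult.right_neutral)

lemma times_differentiable_plateau: "times_differentiable n (plateau p q P Q)"
proof -
  have "times_differentiable n (\<lambda>x. smooth_step ((x - p) / q) + (-1) * smooth_step ((x - P) / Q))"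
    by (intro times_differentiable_add times_differentiable_mult times_differentiable_const
        times_differentiable_compose[OF times_differentiable_smooth_step times_differentiable_affine])
  then show ?thesis unfolding plateau_def[abs_def] by simp
qed

context
  fixes p q P Q :: real
  assumes plateau_shape: "0 < q" "0 < Q" "p + q \<le> P"
begin

lemma plateau_eq_0: "x \<le> p \<or> x \<ge> P + Q \<Longrightarrow> plateau p q P Q x = 0"
  using plateau_shape by (auto simp: plateau_def smooth_step_eq_0 smooth_step_eq_1 divide_simps)

lemma plateau_deriv_eq_0: "x \<le> p \<or> x \<ge> P + Q \<Longrightarrow> plateau_deriv p q P Q x = 0"
  using plateau_shape by (auto simp: plateau_deriv_def ramp_eq_0)

lemma plateau_eq_1: "p + q \<le> x \<Longrightarrow> x \<le> P \<Longrightarrow> plateau p q P Q x = 1"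
  using plateau_shape by (auto simp: plateau_def smooth_step_eq_0 smooth_step_eq_1 divide_simps)

lemma plateau_nonneg: "plateau p q P Q x \<ge> 0"
proof (cases "x \<le> P")
  case True
  then show ?thesis
    using plateau_shape smooth_step_nonneg by (auto simp: plateau_def smooth_step_eq_0 divide_simps)
next
  case False
  then show ?thesis
    using plateau_shape smooth_step_le_1 by (auto simp: plateau_def smooth_step_eq_1 divide_simps)
qed

lemma plateau_le_1: "plateau p q P Q x \<le> 1"
  using smooth_step_nonneg smooth_step_le_1 by (simp add: plateau_def add_increasing2 diff_le_eq)

lemma test_fn_plateau:
  assumes "0 < p" "P + Q < 1"
  shows "test_fn {0<..<1} (plateau p q P Q)"
proof -
  have "{x. plateau p q P Q x \<noteq> 0} \<subseteq> {p..P+Q}"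
  proof
    fix x assume "x \<in> {x. plateau p q P Q x \<noteq> 0}"
    then show "x \<in> {p..P+Q}" using plateau_eq_0[of x] by force
  qed
  then have supp: "closure {x. plateau p q P Q x \<noteq> 0} \<subseteq> {p..P+Q}"
    by (rule closure_minimal) auto
  have "compact (closure {x. plateau p q P Q x \<noteq> 0})"
    by (metis supp closed_closure compact_Icc compact_Int_closed inf.absorb_iff2)
  then show ?thesis
    unfolding test_fn_def
    using supp assms times_differentiable_imp_smooth_fn[OF times_differentiable_plateau] by auto
qed

end

section \<open>Weak derivatives on the unit interval\<close>

lemma set_integral_eq_on_subset:
  assumes "A \<subseteq> B" "\<And>x. x \<in> B - A \<Longrightarrow> f x = 0"
  shows "(LINT x:B|M. f x) = (LINT x:A|M. (f x :: real))"
proof -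
  have "(\<lambda>x. indicator B x *\<^sub>R f x) = (\<lambda>x. indicator A x *\<^sub>R f x)"
    using assms by (auto simp: fun_eq_iff indicator_def)
  then show ?thesis by (simp add: set_lebesgue_integral_def)
qed

lemma absolutely_integrable_mult_continuous:
  fixes f g :: "real \<Rightarrow> real"
  assumes "f absolutely_integrable_on {a..b}" "continuous_on {a..b} g"
  shows "(\<lambda>x. f x * g x) absolutely_integrable_on {a..b}"
proof -
  have "(\<lambda>x. g x * f x) absolutely_integrable_on {a..b}"
  proof (rule absolutely_integrable_bounded_measurable_product_real)
    show "g \<in> borel_measurable (lebesgue_on {a..b})"
      using assms(2) by (intro continuous_imp_measurable_on_sets_lebesgue) auto
    show "bounded (g ` {a..b})"
      using assms(2) by (intro compact_imp_bounded compact_continuous_image) auto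
  qed (use assms in auto)
  then show ?thesis by (simp add: mult.commute)
qed

lemma loc_integrable_on_imp_absolutely_integrable_on:
  fixes f :: "real \<Rightarrow> real"
  shows "loc_integrable_on S f \<Longrightarrow> {a..b} \<subseteq> S \<Longrightarrow> f absolutely_integrable_on {a..b}"
  unfolding loc_integrable_on_def by (meson compact_Icc)

context
  fixes p q P Q :: real
  assumes plateau_inside: "0 < q" "0 < Q" "p + q \<le> P" "0 < p" "P + Q < 1"
begin

lemma weak_partial_plateau:
  assumes "weak_partial {0<..<1} f 1 g"
  shows "(\<lambda>x. f x * plateau_deriv p q P Q x) absolutely_integrable_on {p..P+Q}"
    and "(\<lambda>x. g x * plateau p q P Q x) absolutely_integrable_on {p..P+Q}"
    and "integral {p..P+Q} (\<lambda>x. f x * plateau_deriv p q P Q x)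
        = - integral {p..P+Q} (\<lambda>x. g x * plateau p q P Q x)"
proof -
  have sub: "{p..P+Q} \<subseteq> {0<..<1}" using plateau_inside by auto
  have loc: "loc_integrable_on {0<..<1} f" "loc_integrable_on {0<..<1} g"
    and eq: "(LINT x : {0<..<1} | lebesgue. f x * frechet_derivative (plateau p q P Q) (at x) 1)
          = - (LINT x : {0<..<1} | lebesgue. g x * plateau p q P Q x)"
    using assms test_fn_plateau[OF plateau_inside(1-3) plateau_inside(4,5)]
    unfolding weak_partial_def by auto
  show f_int: "(\<lambda>x. f x * plateau_deriv p q P Q x) absolutely_integrable_on {p..P+Q}"
    using plateau_inside
    by (intro absolutely_integrable_mult_continuous continuous_plateau_deriv
        loc_integrable_on_imp_absolutely_integrable_on[OF loc(1) sub]) auto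
  show g_int: "(\<lambda>x. g x * plateau p q P Q x) absolutely_integrable_on {p..P+Q}"
    using plateau_inside
    by (intro absolutely_integrable_mult_continuous continuous_plateau
        loc_integrable_on_imp_absolutely_integrable_on[OF loc(2) sub]) auto
  have "(LINT x : {0<..<1} | lebesgue. f x * frechet_derivative (plateau p q P Q) (at x) 1)
      = (LINT x : {0<..<1} | lebesgue. f x * plateau_deriv p q P Q x)"
    using plateau_inside by (simp add: frechet_derivative_plateau)
  also have "\<dots> = (LINT x : {p..P+Q} | lebesgue. f x * plateau_deriv p q P Q x)"
    by (rule set_integral_eq_on_subset[OF sub]) (use plateau_deriv_eq_0[OF plateau_inside(1-3)] in auto)
  moreover have "(LINT x : {0<..<1} | lebesgue. g x * plateau p q P Q x)
      = (LINT x : {p..P+Q} | lebesgue. g x * plateau p q P Q x)"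
    by (rule set_integral_eq_on_subset[OF sub]) (use plateau_eq_0[OF plateau_inside(1-3)] in auto)
  ultimately show "integral {p..P+Q} (\<lambda>x. f x * plateau_deriv p q P Q x)
      = - integral {p..P+Q} (\<lambda>x. g x * plateau p q P Q x)"
    using eq by (simp add: set_lebesgue_integral_eq_integral(2)[OF f_int]
        set_lebesgue_integral_eq_integral(2)[OF g_int])
qed

lemma weak_partial_plateau_rearrange:
  assumes wu: "weak_partial {0<..<1} u 1 du" and f: "continuous_on {p..P+Q} f"
  shows "integral {p..P+Q} (\<lambda>r. f r * plateau p q P Q r)
    = integral {p..P+Q} (\<lambda>r. (du r + f r - 1) * plateau p q P Q r)
      + integral {p..P+Q} (plateau p q P Q) + integral {p..P+Q} (\<lambda>r. u r * plateau_deriv p q P Q r)"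
proof -
  have du_int: "(\<lambda>r. du r * plateau p q P Q r) integrable_on {p..P+Q}"
    using weak_partial_plateau(2)[OF wu] set_lebesgue_integral_eq_integral(1) by blast
  have f_int: "(\<lambda>r. f r * plateau p q P Q r) integrable_on {p..P+Q}"
    and \<phi>_int: "plateau p q P Q integrable_on {p..P+Q}"
    using plateau_inside by (intro integrable_continuous_real continuous_intros f continuous_plateau; simp)+
  have "integral {p..P+Q} (\<lambda>r. (du r + f r - 1) * plateau p q P Q r)
      = integral {p..P+Q} (\<lambda>r. du r * plateau p q P Q r + f r * plateau p q P Q r - plateau p q P Q r)"
    by (simp add: algebra_simps)
  also have "\<dots> = integral {p..P+Q} (\<lambda>r. du r * plateau p q P Q r)
      + integral {p..P+Q} (\<lambda>r. f r * plateau p q P Q r) - integral {p..P+Q} (plateau p q P Q)"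
    using du_int f_int \<phi>_int by (simp add: integral_add integral_diff integrable_add)
  finally show ?thesis using weak_partial_plateau(3)[OF wu] by simp
qed

end

lemma integral_mult_ramp_approx:
  assumes e: "0 < e" and sub: "{c..c+e} \<subseteq> {a..b}" and w: "continuous_on {c..c+e} w"
    and close: "\<And>x. x \<in> {c..c+e} \<Longrightarrow> \<bar>w x - w0\<bar> \<le> \<eta>"
  shows "\<bar>integral {a..b} (\<lambda>x. w x * ramp c e x) - w0\<bar> \<le> step_slope * \<eta>"
proof -
  have int: "(\<lambda>x. w x * ramp c e x) integrable_on {c..c+e}"
    and int0: "(\<lambda>x. w0 * ramp c e x) integrable_on {c..c+e}"
    using e by (intro integrable_continuous_real continuous_intros w continuous_ramp; simp)+
  have "integral {a..b} (\<lambda>x. w x * ramp c e x) = integral {c..c+e} (\<lambda>x. w x * ramp c e x)"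
    using e ramp_eq_0[of e _ c]
    by (intro integral_unique has_integral_on_superset[OF integrable_integral[OF int] _ sub]) auto
  moreover have "integral {c..c+e} (ramp c e) = 1"
    using ramp_has_integral[OF e] by (rule integral_unique)
  moreover have "integral {c..c+e} (\<lambda>x. (w x - w0) * ramp c e x)
      = integral {c..c+e} (\<lambda>x. w x * ramp c e x) - integral {c..c+e} (\<lambda>x. w0 * ramp c e x)"
    using integral_diff[OF int int0] by (simp add: algebra_simps)
  moreover have "\<bar>integral {c..c+e} (\<lambda>x. (w x - w0) * ramp c e x)\<bar> \<le> \<eta> * (step_slope / e) * (c + e - c)"
    unfolding real_norm_def[symmetric]
  proof (rule integral_bound)
    show "continuous_on {c..c+e} (\<lambda>x. (w x - w0) * ramp c e x)"
      using e by (intro continuous_intros w continuous_ramp) auto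
    fix x assume "x \<in> {c..c+e}"
    then show "norm ((w x - w0) * ramp c e x) \<le> \<eta> * (step_slope / e)"
      unfolding real_norm_def abs_mult using close abs_ramp_le[OF e]
      by (meson abs_ge_zero mult_mono order_trans)
  qed (use e in auto)
  ultimately show ?thesis using e by (simp add: mult.commute)
qed

lemma abs_integral_le_vanishing_middle:
  fixes f :: "real \<Rightarrow> real"
  assumes "a \<le> c" "c \<le> d" "d \<le> b" and f: "continuous_on {a..b} f"
    and middle: "\<And>x. x \<in> {c..d} \<Longrightarrow> f x = 0" and bound: "\<And>x. x \<in> {a..b} \<Longrightarrow> \<bar>f x\<bar> \<le> M"
  shows "\<bar>integral {a..b} f\<bar> \<le> M * ((c - a) + (b - d))"
proof -
  have cont: "continuous_on {x..y} f" if "a \<le> x" "y \<le> b" for x y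
    using that by (intro continuous_on_subset[OF f]) auto
  have "integral {a..b} f = integral {a..c} f + integral {c..d} f + integral {d..b} f"
    using assms(1-3) cont
    by (simp add: Henstock_Kurzweil_Integration.integral_combine integrable_continuous_real)
  moreover have "integral {c..d} f = 0"
    using integral_cong[of "{c..d}" f "\<lambda>x. 0"] middle by simp
  moreover have "\<bar>integral {x..y} f\<bar> \<le> M * (y - x)" if "a \<le> x" "x \<le> y" "y \<le> b" for x y
    using integral_bound[OF \<open>x \<le> y\<close> cont, of M] bound that by auto
  ultimately show ?thesis using assms(1-3) by (smt (verit) distrib_left)
qed

lemma abs_integral_plateau_defect_le:
  fixes v :: "real \<Rightarrow> real"
  assumes \<epsilon>: "0 < \<epsilon>" "s + \<epsilon> \<le> t - \<epsilon>" and v: "continuous_on {s..t} v"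
    and M: "\<And>x. x \<in> {s..t} \<Longrightarrow> \<bar>v x\<bar> \<le> M"
  shows "\<bar>integral {s..t} (\<lambda>x. v x * plateau s \<epsilon> (t - \<epsilon>) \<epsilon> x - v x)\<bar> \<le> 2 * \<epsilon> * M"
proof -
  have "\<bar>integral {s..t} (\<lambda>x. v x * plateau s \<epsilon> (t - \<epsilon>) \<epsilon> x - v x)\<bar>
      \<le> M * ((s + \<epsilon> - s) + (t - (t - \<epsilon>)))"
  proof (rule abs_integral_le_vanishing_middle)
    show "continuous_on {s..t} (\<lambda>x. v x * plateau s \<epsilon> (t - \<epsilon>) \<epsilon> x - v x)"
      using \<epsilon> by (intro continuous_intros v continuous_plateau) auto
    show "v x * plateau s \<epsilon> (t - \<epsilon>) \<epsilon> x - v x = 0" if "x \<in> {s+\<epsilon>..t-\<epsilon>}" for x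
      using plateau_eq_1[of \<epsilon> \<epsilon> s "t - \<epsilon>" x] \<epsilon> that by simp
    show "\<bar>v x * plateau s \<epsilon> (t - \<epsilon>) \<epsilon> x - v x\<bar> \<le> M" if "x \<in> {s..t}" for x
    proof -
      have "\<bar>v x * plateau s \<epsilon> (t - \<epsilon>) \<epsilon> x - v x\<bar> = \<bar>v x\<bar> * \<bar>1 - plateau s \<epsilon> (t - \<epsilon>) \<epsilon> x\<bar>"
        by (simp add: abs_mult[symmetric] algebra_simps)
      also have "\<dots> \<le> M * 1"
        using M[OF that] plateau_nonneg[of \<epsilon> \<epsilon> s "t - \<epsilon>" x] plateau_le_1[of \<epsilon> \<epsilon> s "t - \<epsilon>" x] \<epsilon>
        by (intro mult_mono) auto
      finally show ?thesis by simp
    qed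
  qed (use \<epsilon> in auto)
  then show ?thesis by (simp add: algebra_simps)
qed

lemma weak_partial_ftc_error:
  fixes w v :: "real \<Rightarrow> real"
  assumes w: "continuous_on {s..t} w" and v: "continuous_on {s..t} v"
    and wv: "weak_partial {0<..<1} w 1 v"
    and st: "0 < s" "t < 1" and \<epsilon>: "0 < \<epsilon>" "2 * \<epsilon> \<le> t - s"
    and near_s: "\<And>x. x \<in> {s..s+\<epsilon>} \<Longrightarrow> \<bar>w x - w s\<bar> \<le> \<eta>\<^sub>1"
    and near_t: "\<And>x. x \<in> {t-\<epsilon>..t} \<Longrightarrow> \<bar>w x - w t\<bar> \<le> \<eta>\<^sub>2"
    and M: "\<And>x. x \<in> {s..t} \<Longrightarrow> \<bar>v x\<bar> \<le> M"
  shows "\<bar>w t - w s - integral {s..t} v\<bar> \<le> step_slope * (\<eta>\<^sub>1 + \<eta>\<^sub>2) + 2 * \<epsilon> * M"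
proof -
  define \<phi> where "\<phi> = plateau s \<epsilon> (t - \<epsilon>) \<epsilon>"
  have shape: "0 < \<epsilon>" "0 < \<epsilon>" "s + \<epsilon> \<le> t - \<epsilon>" and inside: "0 < s" "t - \<epsilon> + \<epsilon> < 1"
    using st \<epsilon> by auto
  have up: "(\<lambda>x. w x * ramp s \<epsilon> x) integrable_on {s..t}"
    and down: "(\<lambda>x. w x * ramp (t - \<epsilon>) \<epsilon> x) integrable_on {s..t}"
    and v_int: "v integrable_on {s..t}" and v\<phi>_int: "(\<lambda>x. v x * \<phi> x) integrable_on {s..t}"
    using \<epsilon> unfolding \<phi>_def
    by (intro integrable_continuous_real continuous_intros w v continuous_ramp continuous_plateau; simp)+
  have "integral {s..t} (\<lambda>x. w x * plateau_deriv s \<epsilon> (t - \<epsilon>) \<epsilon> x)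
      = - integral {s..t} (\<lambda>x. v x * \<phi> x)"
    using weak_partial_plateau(3)[OF shape inside wv] by (simp add: \<phi>_def)
  moreover have "integral {s..t} (\<lambda>x. w x * plateau_deriv s \<epsilon> (t - \<epsilon>) \<epsilon> x)
      = integral {s..t} (\<lambda>x. w x * ramp s \<epsilon> x) - integral {s..t} (\<lambda>x. w x * ramp (t - \<epsilon>) \<epsilon> x)"
    unfolding plateau_deriv_def right_diff_distrib by (rule integral_diff[OF up down])
  moreover have "\<bar>integral {s..t} (\<lambda>x. w x * ramp s \<epsilon> x) - w s\<bar> \<le> step_slope * \<eta>\<^sub>1"
    using shape near_s by (intro integral_mult_ramp_approx continuous_on_subset[OF w]) auto
  moreover have "\<bar>integral {s..t} (\<lambda>x. w x * ramp (t - \<epsilon>) \<epsilon> x) - w t\<bar> \<le> step_slope * \<eta>\<^sub>2"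
    using shape near_t by (intro integral_mult_ramp_approx continuous_on_subset[OF w]) auto
  moreover have "\<bar>integral {s..t} (\<lambda>x. v x * \<phi> x - v x)\<bar> \<le> 2 * \<epsilon> * M"
    unfolding \<phi>_def using shape(1,3) v M by (rule abs_integral_plateau_defect_le)
  moreover have "integral {s..t} (\<lambda>x. v x * \<phi> x - v x) = integral {s..t} (\<lambda>x. v x * \<phi> x) - integral {s..t} v"
    by (rule integral_diff[OF v\<phi>_int v_int])
  ultimately show ?thesis unfolding abs_le_iff by (simp add: algebra_simps)
qed

lemma weak_partial_ftc:
  fixes w v :: "real \<Rightarrow> real"
  assumes w: "continuous_on {0..1} w" and v: "continuous_on {0<..1} v"
    and wv: "weak_partial {0<..<1} w 1 v" and st: "0 < s" "s < t" "t < 1"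
  shows "w t - w s = integral {s..t} v"
proof -
  have v_st: "continuous_on {s..t} v" and w_st: "continuous_on {s..t} w"
    using v w st by (auto intro: continuous_on_subset)
  have "bounded (v ` {s..t})"
    by (intro compact_imp_bounded compact_continuous_image[OF v_st]) simp
  then obtain M where M: "M > 0" "\<And>x. x \<in> {s..t} \<Longrightarrow> \<bar>v x\<bar> \<le> M"
    by (auto simp: bounded_pos)
  have st01: "s \<in> {0..1}" "t \<in> {0..1}" using st by auto
  have "\<bar>w t - w s - integral {s..t} v\<bar> \<le> 0 + \<eta>" if "\<eta> > 0" for \<eta>
  proof -
    define \<eta>' where "\<eta>' = \<eta> / (3 * step_slope)"
    have "\<eta>' > 0" using that step_slope_pos by (simp add: \<eta>'_def)
    obtain d\<^sub>s where d\<^sub>s: "d\<^sub>s > 0" "\<And>x. x \<in> {0..1} \<Longrightarrow> dist x s < d\<^sub>s \<Longrightarrow> dist (w x) (w s) < \<eta>'"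
      using w st01(1) \<open>\<eta>' > 0\<close> unfolding continuous_on_iff by metis
    obtain d\<^sub>t where d\<^sub>t: "d\<^sub>t > 0" "\<And>x. x \<in> {0..1} \<Longrightarrow> dist x t < d\<^sub>t \<Longrightarrow> dist (w x) (w t) < \<eta>'"
      using w st01(2) \<open>\<eta>' > 0\<close> unfolding continuous_on_iff by metis
    define \<epsilon> where "\<epsilon> = min (min (d\<^sub>s/2) (d\<^sub>t/2)) (min ((t-s)/2) (\<eta> / (6 * M)))"
    have \<epsilon>: "0 < \<epsilon>" "2 * \<epsilon> \<le> t - s" "\<epsilon> \<le> \<eta> / (6 * M)" "\<epsilon> < d\<^sub>s" "\<epsilon> < d\<^sub>t"
      using d\<^sub>s d\<^sub>t st M that by (auto simp: \<epsilon>_def min_def)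
    have near_s: "\<bar>w x - w s\<bar> \<le> \<eta>'" if "x \<in> {s..s+\<epsilon>}" for x
      using that st \<epsilon> d\<^sub>s(2)[of x] by (auto simp: dist_real_def)
    have near_t: "\<bar>w x - w t\<bar> \<le> \<eta>'" if "x \<in> {t-\<epsilon>..t}" for x
      using that st \<epsilon> d\<^sub>t(2)[of x] by (auto simp: dist_real_def)
    have "\<bar>w t - w s - integral {s..t} v\<bar> \<le> step_slope * (\<eta>' + \<eta>') + 2 * \<epsilon> * M"
      using st \<epsilon> by (intro weak_partial_ftc_error[OF w_st v_st wv _ _ _ _ near_s near_t M(2)]) auto
    moreover have "step_slope * (\<eta>' + \<eta>') = 2 * \<eta> / 3"
      using step_slope_pos by (simp add: \<eta>'_def)
    moreover have "2 * \<epsilon> * M \<le> \<eta> / 3"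
      using \<epsilon>(3) M(1) by (simp add: field_simps)
    ultimately show ?thesis by linarith
  qed
  then have "\<bar>w t - w s - integral {s..t} v\<bar> \<le> 0" by (rule field_le_epsilon)
  then show ?thesis by simp
qed

section \<open>Energy bounds\<close>

definition energy_density ::
    "real \<Rightarrow> (real \<Rightarrow> real) \<Rightarrow> (real \<Rightarrow> real) \<Rightarrow> (real \<Rightarrow> real) \<Rightarrow> (real \<Rightarrow> real) \<Rightarrow> real \<Rightarrow> real" where
  "energy_density h u du dw ddw r = (u r)\<^sup>2 / r + r * (du r + (dw r)\<^sup>2 - 1)\<^sup>2
      + h\<^sup>2 * (r * (ddw r)\<^sup>2 + (dw r)\<^sup>2 / r)"

lemma energy_density_ge:
  assumes "r > 0"
  shows "(u r)\<^sup>2 / r \<le> energy_density h u du dw ddw r"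
    and "r * (du r + (dw r)\<^sup>2 - 1)\<^sup>2 \<le> energy_density h u du dw ddw r"
    and "h\<^sup>2 * ((dw r)\<^sup>2 / r) \<le> energy_density h u du dw ddw r"
  using assms by (auto simp: energy_density_def distrib_left add_nonneg_nonneg)

lemma integral_le_E_energy:
  assumes E: "E_energy h u du dw ddw = ennreal e" "e \<ge> 0" and sub: "{\<alpha>..\<beta>} \<subseteq> {0<..<1}"
    and G: "G \<in> borel_measurable (lebesgue_on {\<alpha>..\<beta>})"
    and dom: "\<And>x. x \<in> {\<alpha>..\<beta>} \<Longrightarrow> 0 \<le> G x \<and> G x \<le> energy_density h u du dw ddw x"
  shows "G absolutely_integrable_on {\<alpha>..\<beta>}" and "integral {\<alpha>..\<beta>} G \<le> e"
proof -
  define G' where "G' = (\<lambda>x. if x \<in> {\<alpha>..\<beta>} then G x else 0)"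
  have G'_meas: "G' \<in> borel_measurable lebesgue"
    unfolding G'_def by (rule borel_measurable_if_I[OF G]) auto
  have G'_nonneg: "0 \<le> G' x" for x using dom by (auto simp: G'_def)
  have "(\<integral>\<^sup>+ x. ennreal (G' x) \<partial>lebesgue)
      \<le> (\<integral>\<^sup>+ x. ennreal (energy_density h u du dw ddw x) * indicator {0<..<1} x \<partial>lebesgue)"
  proof (rule nn_integral_mono)
    fix x
    show "ennreal (G' x) \<le> ennreal (energy_density h u du dw ddw x) * indicator {0<..<1} x"
      using dom[of x] sub by (auto simp: G'_def indicator_def)
  qed
  also have "\<dots> = E_energy h u du dw ddw"
    unfolding E_energy_def energy_density_def by (simp add: nn_integral_completion)
  finally have le: "(\<integral>\<^sup>+ x. ennreal (G' x) \<partial>lebesgue) \<le> ennreal e" using E(1) by simp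
  have "integrable lebesgue G'"
    by (rule integrableI_nonneg[OF G'_meas]) (use G'_nonneg le in \<open>auto simp: le_less_trans\<close>)
  moreover have G'_eq: "(\<lambda>x. indicator {\<alpha>..\<beta>} x *\<^sub>R G x) = G'"
    by (auto simp: G'_def indicator_def fun_eq_iff)
  ultimately show G_int: "G absolutely_integrable_on {\<alpha>..\<beta>}"
    unfolding set_integrable_def by simp
  have "integral {\<alpha>..\<beta>} G = integral\<^sup>L lebesgue G'"
    using set_lebesgue_integral_eq_integral(2)[OF G_int] G'_eq
    unfolding set_lebesgue_integral_def by simp
  also have "\<dots> = enn2real (\<integral>\<^sup>+ x. ennreal (G' x) \<partial>lebesgue)"
    by (rule integral_eq_nn_integral[OF G'_meas]) (use G'_nonneg in auto)
  also have "\<dots> \<le> e"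
    using enn2real_mono[OF le] E(2) by simp
  finally show "integral {\<alpha>..\<beta>} G \<le> e" .
qed

lemma abs_le_AM_GM:
  fixes A y :: real
  assumes "A > 0"
  shows "\<bar>y\<bar> \<le> A / 2 * y\<^sup>2 + 1 / (2 * A)"
proof -
  have "0 \<le> (A * \<bar>y\<bar> - 1)\<^sup>2" by simp
  then have "2 * A * \<bar>y\<bar> \<le> A\<^sup>2 * y\<^sup>2 + 1" by (simp add: power2_eq_square algebra_simps)
  then show ?thesis using assms by (simp add: field_simps power2_eq_square)
qed

lemma integral_abs_le_energy:
  fixes F \<omega> :: "real \<Rightarrow> real"
  assumes E: "E_energy h u du dw ddw = ennreal e" "e \<ge> 0" and sub: "{\<alpha>..\<beta>} \<subseteq> {0<..<1}"
    and F: "F absolutely_integrable_on {\<alpha>..\<beta>}"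
    and \<omega>: "continuous_on {\<alpha>..\<beta>} \<omega>" "\<And>r. r \<in> {\<alpha>..\<beta>} \<Longrightarrow> \<omega> r > 0"
    and dom: "\<And>r. r \<in> {\<alpha>..\<beta>} \<Longrightarrow> \<omega> r * (F r)\<^sup>2 \<le> energy_density h u du dw ddw r"
    and \<kappa>: "\<kappa> > 0"
  shows "integral {\<alpha>..\<beta>} (\<lambda>r. \<bar>F r\<bar>)
    \<le> \<kappa> / 2 * e + 1 / (2 * \<kappa>) * integral {\<alpha>..\<beta>} (\<lambda>r. 1 / \<omega> r)"
proof -
  have meas: "(\<lambda>r. \<omega> r * (F r)\<^sup>2) \<in> borel_measurable (lebesgue_on {\<alpha>..\<beta>})"
  proof -
    have "F \<in> borel_measurable (lebesgue_on {\<alpha>..\<beta>})"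
      using F absolutely_integrable_measurable[of "{\<alpha>..\<beta>}"] by auto
    moreover have "\<omega> \<in> borel_measurable (lebesgue_on {\<alpha>..\<beta>})"
      using \<omega>(1) by (intro continuous_imp_measurable_on_sets_lebesgue) auto
    ultimately show ?thesis by (intro borel_measurable_times borel_measurable_power)
  qed
  have dom': "0 \<le> \<omega> r * (F r)\<^sup>2 \<and> \<omega> r * (F r)\<^sup>2 \<le> energy_density h u du dw ddw r"
    if "r \<in> {\<alpha>..\<beta>}" for r
    using dom[OF that] \<omega>(2)[OF that] by simp
  have \<omega>F_int: "(\<lambda>r. \<omega> r * (F r)\<^sup>2) integrable_on {\<alpha>..\<beta>}"
    using integral_le_E_energy(1)[OF E sub meas dom'] set_lebesgue_integral_eq_integral(1) by blast
  have \<omega>F_le: "integral {\<alpha>..\<beta>} (\<lambda>r. \<omega> r * (F r)\<^sup>2) \<le> e"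
    by (rule integral_le_E_energy(2)[OF E sub meas dom'])
  have inv_int: "(\<lambda>r. 1 / \<omega> r) integrable_on {\<alpha>..\<beta>}"
  proof -
    have "\<forall>r\<in>{\<alpha>..\<beta>}. \<omega> r \<noteq> 0" using \<omega>(2) by (metis less_irrefl)
    then show ?thesis using \<omega>(1) by (intro integrable_continuous_real continuous_intros)
  qed
  have "integral {\<alpha>..\<beta>} (\<lambda>r. \<bar>F r\<bar>)
      \<le> integral {\<alpha>..\<beta>} (\<lambda>r. \<kappa> / 2 * (\<omega> r * (F r)\<^sup>2) + 1 / (2 * \<kappa>) * (1 / \<omega> r))"
  proof (rule integral_le)
    show "(\<lambda>r. \<bar>F r\<bar>) integrable_on {\<alpha>..\<beta>}"
      using F by (simp add: absolutely_integrable_on_def)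
    show "(\<lambda>r. \<kappa> / 2 * (\<omega> r * (F r)\<^sup>2) + 1 / (2 * \<kappa>) * (1 / \<omega> r)) integrable_on {\<alpha>..\<beta>}"
      by (intro integrable_add integrable_on_mult_right \<omega>F_int inv_int)
    fix r assume r: "r \<in> {\<alpha>..\<beta>}"
    have "\<kappa> * \<omega> r > 0" using \<kappa> \<omega>(2)[OF r] by simp
    from abs_le_AM_GM[OF this, of "F r"]
    show "\<bar>F r\<bar> \<le> \<kappa> / 2 * (\<omega> r * (F r)\<^sup>2) + 1 / (2 * \<kappa>) * (1 / \<omega> r)"
      by (simp add: field_simps)
  qed
  also have "\<dots> = integral {\<alpha>..\<beta>} (\<lambda>r. \<kappa> / 2 * (\<omega> r * (F r)\<^sup>2))
      + integral {\<alpha>..\<beta>} (\<lambda>r. 1 / (2 * \<kappa>) * (1 / \<omega> r))"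
    by (intro integral_add integrable_on_mult_right \<omega>F_int inv_int)
  also have "\<dots> = \<kappa> / 2 * integral {\<alpha>..\<beta>} (\<lambda>r. \<omega> r * (F r)\<^sup>2)
      + 1 / (2 * \<kappa>) * integral {\<alpha>..\<beta>} (\<lambda>r. 1 / \<omega> r)"
    by (simp only: integral_mult_right)
  also have "\<dots> \<le> \<kappa> / 2 * e + 1 / (2 * \<kappa>) * integral {\<alpha>..\<beta>} (\<lambda>r. 1 / \<omega> r)"
    using \<omega>F_le \<kappa> by simp
  finally show ?thesis .
qed

lemma square_integral_le:
  fixes f :: "real \<Rightarrow> real"
  assumes "a < b" and f: "continuous_on {a..b} f"
  shows "(integral {a..b} f)\<^sup>2 / (b - a) \<le> integral {a..b} (\<lambda>x. (f x)\<^sup>2)"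
proof -
  define \<mu> where "\<mu> = integral {a..b} f / (b - a)"
  have "integral {a..b} (\<lambda>x. 2 * \<mu> * f x - \<mu>\<^sup>2) \<le> integral {a..b} (\<lambda>x. (f x)\<^sup>2)"
  proof (rule integral_le)
    fix x
    have "0 \<le> (f x - \<mu>)\<^sup>2" by simp
    then show "2 * \<mu> * f x - \<mu>\<^sup>2 \<le> (f x)\<^sup>2" by (simp add: power2_eq_square algebra_simps)
  qed (use f in \<open>auto intro!: integrable_continuous_real continuous_intros\<close>)
  moreover have "integral {a..b} (\<lambda>x. 2 * \<mu> * f x - \<mu>\<^sup>2) = 2 * \<mu> * integral {a..b} f - \<mu>\<^sup>2 * (b - a)"
  proof -
    have "(\<lambda>x. 2 * \<mu> * f x) integrable_on {a..b}"
      using f by (intro integrable_continuous_real continuous_intros)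
    then have "integral {a..b} (\<lambda>x. 2 * \<mu> * f x - \<mu>\<^sup>2)
        = integral {a..b} (\<lambda>x. 2 * \<mu> * f x) - integral {a..b} (\<lambda>x. \<mu>\<^sup>2)"
      by (rule integral_diff) (rule integrable_const_ivl)
    then show ?thesis using assms by simp
  qed
  moreover have "2 * \<mu> * integral {a..b} f - \<mu>\<^sup>2 * (b - a) = (integral {a..b} f)\<^sup>2 / (b - a)"
  proof -
    have "\<mu> * (b - a) = integral {a..b} f" using assms by (simp add: \<mu>_def)
    then have "2 * \<mu> * integral {a..b} f - \<mu>\<^sup>2 * (b - a) = \<mu> * integral {a..b} f"
      by (simp add: power2_eq_square algebra_simps)
    then show ?thesis by (simp add: \<mu>_def power2_eq_square)
  qed
  ultimately show ?thesis by simp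
qed

lemma abs_plateau_deriv_le:
  assumes "0 < h" "h < a" "x \<in> {h/2..a+a}"
  shows "\<bar>plateau_deriv (h/2) (h/2) a a x\<bar> \<le> 2 * step_slope / x"
proof -
  have x: "0 < x" "x \<le> a + a" using assms by auto
  have up: "\<bar>ramp (h/2) (h/2) x\<bar> \<le> (if x < h then 2 * step_slope / x else 0)"
  proof -
    have "step_slope / (h/2) \<le> 2 * step_slope / x" if "x < h"
      using that x step_slope_pos by (simp add: frac_le)
    then show ?thesis using abs_ramp_le[of "h/2" "h/2" x] ramp_eq_0[of "h/2" x "h/2"] assms by auto
  qed
  have down: "\<bar>ramp a a x\<bar> \<le> (if x > a then 2 * step_slope / x else 0)"
  proof -
    have "step_slope / a \<le> 2 * step_slope / x" if "x > a"
      using that x step_slope_pos by (simp add: field_simps)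
    then show ?thesis using abs_ramp_le[of a a x] ramp_eq_0[of a x a] assms by auto
  qed
  show ?thesis
    using up down assms step_slope_pos x
    unfolding plateau_deriv_def by (smt (verit) divide_nonneg_nonneg)
qed

lemma weak_partial_slope_le_imp_ge:
  fixes w v :: "real \<Rightarrow> real"
  assumes w: "continuous_on {0..1} w" and v: "continuous_on {0<..1} v"
    and wv: "weak_partial {0<..<1} w 1 v" and a: "0 < a" "a < 1"
    and slope: "\<And>r. r \<in> {a..1} \<Longrightarrow> v r \<le> - m"
  shows "w 1 + m * (1 - a) \<le> w a"
proof (rule tendsto_le[OF trivial_limit_at_left_real tendsto_const])
  show "((\<lambda>t. w t + m * (t - a)) \<longlongrightarrow> w 1 + m * (1 - a)) (at_left 1)"
    using continuous_on_Icc_at_leftD[OF w] by (intro tendsto_intros) auto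
  have "w t + m * (t - a) \<le> w a" if "a < t" "t < 1" for t
  proof -
    have "w t - w a = integral {a..t} v" by (rule weak_partial_ftc[OF w v wv]) (use a that in auto)
    also have "\<dots> \<le> integral {a..t} (\<lambda>x. - m)"
      using that a slope
      by (intro integral_le integrable_continuous_real continuous_on_subset[OF v]) auto
    finally show ?thesis using that by (simp add: algebra_simps)
  qed
  then show "\<forall>\<^sub>F t in at_left 1. w t + m * (t - a) \<le> w a"
    unfolding eventually_at_left_field using a by blast
qed

lemma integral_reciprocal:
  fixes \<alpha> \<beta> :: real
  assumes "0 < \<alpha>" "\<alpha> \<le> \<beta>"
  shows "integral {\<alpha>..\<beta>} (\<lambda>x. 1 / x) = ln \<beta> - ln \<alpha>"
proof -
  have "((\<lambda>x. 1 / x) has_integral (ln \<beta> - ln \<alpha>)) {\<alpha>..\<beta>}"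
  proof (rule fundamental_theorem_of_calculus[OF assms(2)])
    fix x assume "x \<in> {\<alpha>..\<beta>}"
    then have "(ln has_real_derivative 1 / x) (at x)" using assms by (auto intro: DERIV_ln_divide)
    then show "(ln has_vector_derivative 1 / x) (at x within {\<alpha>..\<beta>})"
      unfolding has_real_derivative_iff_has_vector_derivative by (rule has_vector_derivative_at_within)
  qed
  then show ?thesis by (rule integral_unique)
qed

lemma integral_abs_le_energy_reciprocal:
  fixes F :: "real \<Rightarrow> real"
  assumes E: "E_energy h u du dw ddw = ennreal e" "e \<ge> 0" and I: "0 < \<alpha>" "\<alpha> \<le> \<beta>" "\<beta> < 1"
    and F: "F absolutely_integrable_on {\<alpha>..\<beta>}"
    and dom: "\<And>r. r \<in> {\<alpha>..\<beta>} \<Longrightarrow> r * (F r)\<^sup>2 \<le> energy_density h u du dw ddw r" and \<kappa>: "\<kappa> > 0"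
  shows "integral {\<alpha>..\<beta>} (\<lambda>r. \<bar>F r\<bar>) \<le> \<kappa> / 2 * e + (ln \<beta> - ln \<alpha>) / (2 * \<kappa>)"
proof -
  have "integral {\<alpha>..\<beta>} (\<lambda>r. \<bar>F r\<bar>) \<le> \<kappa> / 2 * e + 1 / (2 * \<kappa>) * integral {\<alpha>..\<beta>} (\<lambda>r. 1 / r)"
    using I by (intro integral_abs_le_energy[OF E _ F _ _ dom \<kappa>] continuous_on_id) auto
  then show ?thesis using I by (simp add: integral_reciprocal)
qed

lemma exists_near_0_less:
  fixes w :: "real \<Rightarrow> real"
  assumes w: "continuous_on {0..1} w" and "w 0 < y" "0 < c"
  shows "\<exists>s. 0 < s \<and> s < c \<and> w s < y"
proof -
  have "\<forall>\<^sub>F s in at_right 0. w s < y"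
    using order_tendstoD(2)[OF continuous_on_Icc_at_rightD[OF w] \<open>w 0 < y\<close>] by simp
  moreover have "\<forall>\<^sub>F s in at_right 0. s < c"
    unfolding eventually_at_right_field using \<open>0 < c\<close> by (intro exI[of _ c]) auto
  ultimately have "\<forall>\<^sub>F s in at_right 0. w s < y \<and> s < c"
    by (rule eventually_conj)
  then obtain b where b: "b > 0" "\<And>s. 0 < s \<Longrightarrow> s < b \<Longrightarrow> w s < y \<and> s < c"
    unfolding eventually_at_right_field by blast
  then show ?thesis using b(2)[of "b/2"] by (intro exI[of _ "b/2"]) auto
qed

context
  fixes \<delta> h e :: real and u w du dw ddw :: "real \<Rightarrow> real"
  assumes \<delta>: "0 < \<delta>" "\<delta> \<le> 1" and h: "0 < h"
    and w: "continuous_on {0..1} w" "w 0 = 0" "w 1 = 1 - \<delta>"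
    and weak_u: "weak_partial {0<..<1} u 1 du" and weak_w: "weak_partial {0<..<1} w 1 dw"
    and dw: "continuous_on {0<..1} dw"
    and slope: "\<And>r. r \<in> {\<delta>/8..1} \<Longrightarrow> dw r < -1/2"
    and E: "E_energy h u du dw ddw = ennreal e" "e \<ge> 0"
begin

lemma continuous_on_dw: "0 < \<alpha> \<Longrightarrow> \<beta> \<le> 1 \<Longrightarrow> continuous_on {\<alpha>..\<beta>} dw"
  by (rule continuous_on_subset[OF dw]) auto

lemma w_eighth_ge: "7/16 \<le> w (\<delta>/8)"
proof -
  have "w 1 + 1/2 * (1 - \<delta>/8) \<le> w (\<delta>/8)"
    using \<delta> slope by (intro weak_partial_slope_le_imp_ge[OF w(1) dw weak_w]) (auto simp: less_imp_le)
  then show ?thesis using \<delta> w(3) by (simp add: field_simps)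
qed

lemma integral_abs_dw_le_bending:
  assumes "0 < s" "s \<le> b" "b < 1"
  shows "integral {s..b} (\<lambda>r. \<bar>dw r\<bar>) \<le> 8 * b\<^sup>2 * e / h\<^sup>2 + 1/64"
proof -
  define \<kappa> where "\<kappa> = 16 * b\<^sup>2 / h\<^sup>2"
  have \<kappa>: "\<kappa> > 0" using assms h by (simp add: \<kappa>_def)
  have "((\<lambda>r. 1 / (h\<^sup>2 / r)) has_integral (b\<^sup>2 / (2 * h\<^sup>2) - s\<^sup>2 / (2 * h\<^sup>2))) {s..b}"
  proof (rule fundamental_theorem_of_calculus[OF assms(2)])
    fix x assume "x \<in> {s..b}"
    then show "((\<lambda>r. r\<^sup>2 / (2 * h\<^sup>2)) has_vector_derivative 1 / (h\<^sup>2 / x)) (at x within {s..b})"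
      unfolding has_real_derivative_iff_has_vector_derivative[symmetric]
      using h by (auto intro!: derivative_eq_intros simp: field_simps power2_eq_square)
  qed
  then have "integral {s..b} (\<lambda>r. 1 / (h\<^sup>2 / r)) = b\<^sup>2 / (2 * h\<^sup>2) - s\<^sup>2 / (2 * h\<^sup>2)"
    by (rule integral_unique)
  then have inv: "integral {s..b} (\<lambda>r. 1 / (h\<^sup>2 / r)) \<le> b\<^sup>2 / (2 * h\<^sup>2)"
    using h by simp
  have "integral {s..b} (\<lambda>r. \<bar>dw r\<bar>) \<le> \<kappa> / 2 * e + 1 / (2 * \<kappa>) * integral {s..b} (\<lambda>r. 1 / (h\<^sup>2 / r))"
  proof (rule integral_abs_le_energy[OF E _ _ _ _ _ \<kappa>])
    show "dw absolutely_integrable_on {s..b}"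
      using assms by (intro absolutely_integrable_continuous_real continuous_on_dw) auto
    show "h\<^sup>2 / r * (dw r)\<^sup>2 \<le> energy_density h u du dw ddw r" if "r \<in> {s..b}" for r
      using energy_density_ge(3)[of r] that assms by simp
  qed (use assms h in \<open>auto intro!: continuous_intros\<close>)
  also have "\<dots> \<le> \<kappa> / 2 * e + 1 / (2 * \<kappa>) * (b\<^sup>2 / (2 * h\<^sup>2))"
    using inv \<kappa> by (intro add_left_mono mult_left_mono) auto
  also have "\<dots> = 8 * b\<^sup>2 * e / h\<^sup>2 + 1/64"
    using assms h by (simp add: \<kappa>_def field_simps power2_eq_square)
  finally show ?thesis .
qed

lemma rise_on_outer_range:
  assumes e_small: "e < 1/512"
  shows "h < \<delta>/8" and "3/8 \<le> integral {h..\<delta>/8} dw"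
proof -
  define a where "a = \<delta>/8"
  have a: "0 < a" "a \<le> 1/8" using \<delta> by (auto simp: a_def)
  obtain s where "0 < s" "s < min h a" "w s < 1/32"
    using exists_near_0_less[OF w(1), of "1/32" "min h a"] w(2) h a by auto
  then have s: "0 < s" "s < h" "s < a" "w s < 1/32" by auto
  have "w a - w s = integral {s..a} dw"
    using s a by (intro weak_partial_ftc[OF w(1) dw weak_w]) auto
  then have rise: "13/32 \<le> integral {s..a} dw"
    using w_eighth_ge s(4) by (simp add: a_def)
  have int_le_abs: "integral {s..b} dw \<le> integral {s..b} (\<lambda>r. \<bar>dw r\<bar>)" if "s \<le> b" "b < 1" for b
    using s that continuous_on_dw[of s b]
    by (intro integral_le integrable_continuous_real continuous_intros) auto
  show "h < \<delta>/8"
  proof (rule ccontr)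
    assume "\<not> h < \<delta>/8"
    then have "a \<le> h" by (simp add: a_def)
    then have "a\<^sup>2 / h\<^sup>2 \<le> 1" using a h by (simp add: power_mono)
    then have "8 * a\<^sup>2 * e / h\<^sup>2 \<le> 8 * e"
      using mult_left_mono[of "a\<^sup>2 / h\<^sup>2" 1 "8 * e"] E(2) by (simp add: mult.commute mult.left_commute)
    then show False
      using rise int_le_abs[of a] integral_abs_dw_le_bending[of s a] s a e_small by linarith
  qed
  then have split: "integral {s..a} dw = integral {s..h} dw + integral {h..a} dw"
    using s a continuous_on_dw[of s a]
    by (intro Henstock_Kurzweil_Integration.integral_combine[symmetric] integrable_continuous_real)
      (auto simp: a_def)
  have "integral {s..h} dw \<le> 8 * e + 1/64"
    using int_le_abs[of h] integral_abs_dw_le_bending[of s h] s h \<open>h < \<delta>/8\<close> a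
    by (simp add: a_def power2_eq_square)
  then show "3/8 \<le> integral {h..\<delta>/8} dw"
    using rise split e_small unfolding a_def by linarith
qed

lemma abs_integral_stretching_le:
  assumes shape: "0 < q" "0 < Q" "p + q \<le> P" "0 < p" "P + Q < 1" and \<kappa>: "\<kappa> > 0"
  shows "\<bar>integral {p..P+Q} (\<lambda>r. (du r + (dw r)\<^sup>2 - 1) * plateau p q P Q r)\<bar>
    \<le> \<kappa> / 2 * e + (ln (P + Q) - ln p) / (2 * \<kappa>)"
proof -
  define g where "g = (\<lambda>r. du r + (dw r)\<^sup>2 - 1)"
  have K_sub: "{p..P+Q} \<subseteq> {0<..<1}" using shape by auto
  have "du absolutely_integrable_on {p..P+Q}"
    using weak_u K_sub unfolding weak_partial_def by (blast intro: loc_integrable_on_imp_absolutely_integrable_on)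
  moreover have "(\<lambda>r. (dw r)\<^sup>2 - 1) absolutely_integrable_on {p..P+Q}"
    using shape by (intro absolutely_integrable_continuous_real continuous_intros continuous_on_dw) auto
  ultimately have g_int: "g absolutely_integrable_on {p..P+Q}"
    unfolding g_def by (simp add: add_diff_eq[symmetric] set_integral_add(1))
  have "norm (integral {p..P+Q} (\<lambda>r. g r * plateau p q P Q r)) \<le> integral {p..P+Q} (\<lambda>r. \<bar>g r\<bar>)"
  proof (rule integral_norm_bound_integral)
    show "(\<lambda>r. g r * plateau p q P Q r) integrable_on {p..P+Q}"
      using absolutely_integrable_mult_continuous[OF g_int continuous_plateau] shape
      by (simp add: set_lebesgue_integral_eq_integral(1))
    show "(\<lambda>r. \<bar>g r\<bar>) integrable_on {p..P+Q}"
      using g_int by (simp add: absolutely_integrable_on_def)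
    show "norm (g r * plateau p q P Q r) \<le> \<bar>g r\<bar>" for r
      using plateau_nonneg[OF shape(1-3), of r] plateau_le_1[OF shape(1-3), of r]
      by (simp add: abs_mult mult_left_le)
  qed
  also have "\<dots> \<le> \<kappa> / 2 * e + (ln (P + Q) - ln p) / (2 * \<kappa>)"
    using shape energy_density_ge(2)
    by (intro integral_abs_le_energy_reciprocal[OF E _ _ _ g_int _ \<kappa>]) (auto simp: g_def)
  finally show ?thesis by (simp add: g_def)
qed

lemma abs_integral_compression_le:
  assumes shape: "h < a" "a + a < 1" and \<kappa>: "\<kappa> > 0"
  shows "\<bar>integral {h/2..a+a} (\<lambda>r. u r * plateau_deriv (h/2) (h/2) a a r)\<bar>
    \<le> 2 * step_slope * (\<kappa> / 2 * e + (ln (a + a) - ln (h/2)) / (2 * \<kappa>))"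
proof -
  have inside: "0 < h/2" "0 < a" "h/2 + h/2 \<le> a" "0 < h/2" "a + a < 1" using shape h by auto
  have K_sub: "{h/2..a+a} \<subseteq> {0<..<1}" using inside by auto
  have u_K: "u absolutely_integrable_on {h/2..a+a}"
    using weak_u K_sub unfolding weak_partial_def
    by (blast intro: loc_integrable_on_imp_absolutely_integrable_on)
  have u_r_int: "(\<lambda>r. u r * (1 / r)) absolutely_integrable_on {h/2..a+a}"
    using inside by (intro absolutely_integrable_mult_continuous u_K continuous_intros) auto
  have "norm (integral {h/2..a+a} (\<lambda>r. u r * plateau_deriv (h/2) (h/2) a a r))
      \<le> integral {h/2..a+a} (\<lambda>r. 2 * step_slope * \<bar>u r * (1 / r)\<bar>)"
  proof (rule integral_norm_bound_integral)
    show "(\<lambda>r. u r * plateau_deriv (h/2) (h/2) a a r) integrable_on {h/2..a+a}"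
      using weak_partial_plateau(1)[OF inside weak_u] set_lebesgue_integral_eq_integral(1) by blast
    show "(\<lambda>r. 2 * step_slope * \<bar>u r * (1 / r)\<bar>) integrable_on {h/2..a+a}"
      using u_r_int by (intro integrable_on_mult_right) (simp add: absolutely_integrable_on_def)
    fix r assume r: "r \<in> {h/2..a+a}"
    then have "\<bar>plateau_deriv (h/2) (h/2) a a r\<bar> \<le> 2 * step_slope / r"
      using h shape by (intro abs_plateau_deriv_le) auto
    then have "\<bar>u r\<bar> * \<bar>plateau_deriv (h/2) (h/2) a a r\<bar> \<le> \<bar>u r\<bar> * (2 * step_slope / r)"
      by (rule mult_left_mono) simp
    also have "\<dots> = 2 * step_slope * \<bar>u r * (1 / r)\<bar>" using r inside by (simp add: abs_mult)
    finally show "norm (u r * plateau_deriv (h/2) (h/2) a a r) \<le> 2 * step_slope * \<bar>u r * (1 / r)\<bar>"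
      by (simp add: abs_mult)
  qed
  also have "\<dots> = 2 * step_slope * integral {h/2..a+a} (\<lambda>r. \<bar>u r * (1 / r)\<bar>)"
    by (rule integral_mult_right)
  also have "integral {h/2..a+a} (\<lambda>r. \<bar>u r * (1 / r)\<bar>) \<le> \<kappa> / 2 * e + (ln (a + a) - ln (h/2)) / (2 * \<kappa>)"
  proof (rule integral_abs_le_energy_reciprocal[OF E _ _ _ u_r_int _ \<kappa>])
    fix r assume "r \<in> {h/2..a+a}"
    then have "r > 0" using inside by auto
    then show "r * (u r * (1 / r))\<^sup>2 \<le> energy_density h u du dw ddw r"
      using energy_density_ge(1)[of r] by (simp add: power2_eq_square)
  qed (use inside in auto)
  finally show ?thesis using step_slope_pos by simp
qed

lemma integral_dw_square_le:
  assumes h_lt: "h < \<delta>/8" and \<kappa>: "\<kappa> > 0"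
  shows "integral {h..\<delta>/8} (\<lambda>r. (dw r)\<^sup>2)
    \<le> \<delta>/4 + (1 + 2 * step_slope) * (\<kappa> / 2 * e + (ln (\<delta>/4) - ln (h/2)) / (2 * \<kappa>))"
proof -
  define a where "a = \<delta>/8"
  define \<phi> where "\<phi> = plateau (h/2) (h/2) a a"
  define B where "B = \<kappa> / 2 * e + (ln (\<delta>/4) - ln (h/2)) / (2 * \<kappa>)"
  have aa: "a + a = \<delta>/4" by (simp add: a_def)
  have shape: "0 < h/2" "0 < a" "h/2 + h/2 \<le> a" and inside: "0 < h/2" "a + a < 1"
    using \<delta> h h_lt by (auto simp: a_def)
  have dw\<phi>_int: "(\<lambda>r. (dw r)\<^sup>2 * \<phi> r) integrable_on {h/2..a+a}"
    unfolding \<phi>_def using shape inside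
    by (intro integrable_continuous_real continuous_intros continuous_on_dw continuous_plateau) auto
  have "integral {h..a} (\<lambda>r. (dw r)\<^sup>2) = integral {h..a} (\<lambda>r. (dw r)\<^sup>2 * \<phi> r)"
    using plateau_eq_1[OF shape] by (intro integral_cong) (auto simp: \<phi>_def)
  also have "\<dots> \<le> integral {h/2..a+a} (\<lambda>r. (dw r)\<^sup>2 * \<phi> r)"
    using shape h_lt plateau_nonneg[OF shape]
    by (intro integral_subset_le dw\<phi>_int integrable_subinterval_real[OF dw\<phi>_int]) (auto simp: \<phi>_def a_def)
  also have "\<dots> = integral {h/2..a+a} (\<lambda>r. (du r + (dw r)\<^sup>2 - 1) * \<phi> r) + integral {h/2..a+a} \<phi>
        + integral {h/2..a+a} (\<lambda>r. u r * plateau_deriv (h/2) (h/2) a a r)"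
    unfolding \<phi>_def using inside
    by (intro weak_partial_plateau_rearrange[OF shape inside weak_u] continuous_intros continuous_on_dw) auto
  also have "\<dots> \<le> B + (a + a) + 2 * step_slope * B"
  proof -
    have "integral {h/2..a+a} \<phi> \<le> integral {h/2..a+a} (\<lambda>r. 1)"
      unfolding \<phi>_def using shape plateau_le_1[OF shape]
      by (intro integral_le integrable_continuous_real continuous_plateau) auto
    then show ?thesis
      using abs_integral_stretching_le[OF shape inside \<kappa>] abs_integral_compression_le[of a \<kappa>]
        shape inside h_lt \<kappa> unfolding \<phi>_def B_def abs_le_iff aa by (simp add: a_def)
  qed
  also have "\<dots> = \<delta>/4 + (1 + 2 * step_slope) * B" by (simp add: aa algebra_simps)
  finally show ?thesis by (simp add: a_def B_def)
qed

lemma integral_dw_square_ge: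
  assumes "e < 1/512"
  shows "9 / (8 * \<delta>) \<le> integral {h..\<delta>/8} (\<lambda>r. (dw r)\<^sup>2)"
proof -
  have h_lt: "h < \<delta>/8" and rise: "3/8 \<le> integral {h..\<delta>/8} dw"
    using rise_on_outer_range[OF assms] by auto
  have "9/64 \<le> (integral {h..\<delta>/8} dw)\<^sup>2"
    using power_mono[OF rise, of 2] by (simp add: power2_eq_square)
  then have "9 / (8 * \<delta>) \<le> (integral {h..\<delta>/8} dw)\<^sup>2 / (\<delta>/8 - h)"
    using frac_le[of "(integral {h..\<delta>/8} dw)\<^sup>2" "9/64" "\<delta>/8 - h" "\<delta>/8"] h h_lt by simp
  also have "\<dots> \<le> integral {h..\<delta>/8} (\<lambda>r. (dw r)\<^sup>2)"
    using h h_lt \<delta> by (intro square_integral_le continuous_on_dw) auto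
  finally show ?thesis .
qed

lemma energy_lower_bound:
  "min (1 / (\<delta>\<^sup>2 * ln (1 / h))) 1 \<le> max 512 (64 * (1 + 2 * step_slope)\<^sup>2 / 49) * e"
proof (cases "e < 1/512")
  case False
  then have "1 \<le> 512 * e" by simp
  also have "\<dots> \<le> max 512 (64 * (1 + 2 * step_slope)\<^sup>2 / 49) * e" using E(2) by (intro mult_right_mono) auto
  finally show ?thesis by linarith
next
  case True
  define L where "L = ln (\<delta>/4) - ln (h/2)"
  define C where "C = 1 + 2 * step_slope"
  have h_lt: "h < \<delta>/8" using rise_on_outer_range[OF True] by simp
  have "ln ((\<delta>/4) / (h/2)) = L" unfolding L_def using h \<delta> by (intro ln_divide_pos) auto
  moreover have "(\<delta>/4) / (h/2) = \<delta> / (2 * h)" by (simp add: field_simps)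
  ultimately have L_eq: "L = ln (\<delta> / (2 * h))" by simp
  have L: "0 < L" "L \<le> ln (1 / h)"
    using h h_lt \<delta> unfolding L_eq by (simp_all add: field_simps)
  have C: "C > 0" using step_slope_pos by (simp add: C_def)
  \<comment> \<open>\<kappa> makes the logarithmic AM-GM term equal to 7/(16\<delta>)\<close>
  define \<kappa> where "\<kappa> = 8 * \<delta> * C * L / 7"
  have \<kappa>: "\<kappa> > 0" using \<delta> C L by (simp add: \<kappa>_def)
  have "9 / (8 * \<delta>) \<le> \<delta>/4 + C * (\<kappa> / 2 * e + L / (2 * \<kappa>))"
    using integral_dw_square_ge[OF True] integral_dw_square_le[OF h_lt \<kappa>] by (simp add: C_def L_def)
  also have "\<dots> = \<delta>/4 + 7 / (16 * \<delta>) + 4 * \<delta> * C\<^sup>2 * L * e / 7"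
    using \<delta> C L by (simp add: \<kappa>_def field_simps power2_eq_square)
  also have "\<delta>/4 \<le> 1 / (4 * \<delta>)"
    using \<delta> mult_mono[of \<delta> 1 \<delta> 1] by (simp add: field_simps)
  finally have "49 \<le> 64 * \<delta>\<^sup>2 * C\<^sup>2 * L * e"
    using \<delta> by (simp add: field_simps power2_eq_square)
  then have "1 / (\<delta>\<^sup>2 * L) \<le> 64 * C\<^sup>2 / 49 * e"
    using \<delta> L by (simp add: field_simps)
  moreover have "1 / (\<delta>\<^sup>2 * ln (1 / h)) \<le> 1 / (\<delta>\<^sup>2 * L)"
    using \<delta> L by (intro divide_left_mono mult_left_mono mult_pos_pos) auto
  moreover have "64 * C\<^sup>2 / 49 * e \<le> max 512 (64 * (1 + 2 * step_slope)\<^sup>2 / 49) * e"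
    using E(2) by (intro mult_right_mono) (auto simp: C_def)
  ultimately show ?thesis by linarith
qed

end

theorem lemma3p7:
  shows "\<exists>C>0. \<forall>(\<delta>::real) (h::real) u w du dw ddw.
     0 \<le> \<delta> \<and> \<delta> \<le> 1 \<and> 0 < h \<and> h \<le> 1/2 \<and> h \<le> \<delta>
     \<and> (u, w) \<in> A_adm \<delta>
     \<and> weak_partial {0<..<1} u 1 du
     \<and> weak_partial {0<..<1} w 1 dw \<and> continuous_on {0<..1} dw
     \<and> weak_partial {0<..<1} dw 1 ddw
     \<and> (\<forall>r\<in>{\<delta>/8..1}. -3/2 < dw r \<and> dw r < -1/2)
     \<longrightarrow> ennreal (min (1 / (\<delta>\<^sup>2 * ln (1 / h))) 1) \<le> ennreal C * E_energy h u du dw ddw"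
proof -
  define C where "C = max 512 (64 * (1 + 2 * step_slope)\<^sup>2 / 49)"
  have C: "C > 0" by (simp add: C_def)
  have "ennreal (min (1 / (\<delta>\<^sup>2 * ln (1 / h))) 1) \<le> ennreal C * E_energy h u du dw ddw"
    if hyps: "0 \<le> \<delta> \<and> \<delta> \<le> 1 \<and> 0 < h \<and> h \<le> 1/2 \<and> h \<le> \<delta> \<and> (u, w) \<in> A_adm \<delta>
      \<and> weak_partial {0<..<1} u 1 du \<and> weak_partial {0<..<1} w 1 dw \<and> continuous_on {0<..1} dw
      \<and> weak_partial {0<..<1} dw 1 ddw \<and> (\<forall>r\<in>{\<delta>/8..1}. -3/2 < dw r \<and> dw r < -1/2)"
    for \<delta> h :: real and u w du dw ddw :: "real \<Rightarrow> real"
  proof (cases "E_energy h u du dw ddw")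
    case (real e)
    have "min (1 / (\<delta>\<^sup>2 * ln (1 / h))) 1 \<le> C * e"
      unfolding C_def using hyps real by (intro energy_lower_bound[where \<delta>=\<delta> and h=h and e=e and u=u and w=w and du=du and dw=dw and ddw=ddw]) (auto simp: A_adm_def)
    then show ?thesis using real C by (simp add: ennreal_mult[symmetric] ennreal_leI)
  qed (use C in \<open>simp add: ennreal_mult_top\<close>)
  then show ?thesis using C by blast
qed

end
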